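(* Let $A_1,\dots,A_n$ be fixed positive-semidefinite $d\times d$ matrices (real or complex) and $k\in\mathbb{N}$. Let $(\delta_1,\dots,\delta_n)\sim\textsc{multinomial}(k,n)$ (the occupancy counts of $k$ balls placed independently and uniformly at random in $n$ bins), and let $Q_1,\dots,Q_n$ be iid $\textsc{poisson}(k/n)$ random variables. Define $\widehat Y_n=\sum_{i=1}^n\delta_iA_i$ and $X_n=\sum_{i=1}^nQ_iA_i$. Then for all $\theta\ge0$, \[ \mathbb{E}\operatorname{Tr}e^{-\theta(\widehat Y_n-\mathbb{E}\widehat Y_n)}\le2\,\mathbb{E}\operatorname{Tr}e^{-\theta(X_n-\mathbb{E}X_n)}. \]
   Context: $e^M$ is the matrix exponential. Note $\mathbb{E}\widehat Y_n=\mathbb{E}X_n=\frac kn\sum_{i=1}^nA_i$. *)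

theory Defs
  imports "HOL-Analysis.Analysis" "HOL-Probability.Probability"
begin

text \<open>Matrix power with respect to matrix multiplication (note: ^ on vec is componentwise).\<close>
primrec matrix_pow :: "'a::semiring_1^'n^'n \<Rightarrow> nat \<Rightarrow> 'a^'n^'n" where
  "matrix_pow M 0 = mat 1"
| "matrix_pow M (Suc m) = M ** matrix_pow M m"

definition mexp :: "complex^'n^'n \<Rightarrow> complex^'n^'n" where
  "mexp M = (\<Sum>m. (1 / fact m) *\<^sub>R matrix_pow M m)"

definition hermitian :: "complex^'n^'n \<Rightarrow> bool" where
  "hermitian A \<longleftrightarrow> (\<forall>i j. A $ i $ j = cnj (A $ j $ i))"

definition psd :: "complex^'n^'n \<Rightarrow> bool" where
  "psd A \<longleftrightarrow> hermitian A \<and>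
     (\<forall>x::complex^'n. 0 \<le> Re (\<Sum>i\<in>UNIV. \<Sum>j\<in>UNIV. cnj (x $ i) * A $ i $ j * x $ j))"

definition poisson :: "real \<Rightarrow> nat pmf" where
  "poisson r = (if 0 < r then poisson_pmf r else return_pmf 0)"

definition balls_in_bins :: "nat \<Rightarrow> nat \<Rightarrow> (nat \<Rightarrow> nat) pmf" where
  "balls_in_bins k n = Pi_pmf {..<k} 0 (\<lambda>_. pmf_of_set {..<n})"

text \<open>Occupancy count of bin i: delta_i.  (delta_0..delta_{n-1}) ~ multinomial(k,n).\<close>
definition occupancy :: "nat \<Rightarrow> (nat \<Rightarrow> nat) \<Rightarrow> nat \<Rightarrow> nat" where
  "occupancy k f i = card {j\<in>{..<k}. f j = i}"

end

theory Submission
  imports Defs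
begin

(* For a vector c of counts let F c = Re tr exp (-theta (sum_i c_i A_i - EY)). Because the A_i
   are positive semidefinite, F is nonnegative and antitone in c: the derivative of
   t -> Re tr exp (H + t B) is Re tr (B e^(X/2) e^(X/2)) >= 0 for B psd and X = H + t B Hermitian.
   Hence the expectation of F under the occupancy law of m balls in n bins decreases as m grows.
   Independent Poisson(k/n) counts are the occupancy counts of N ~ Poisson(k) balls, so
   E F(Q) >= P(N <= k) E F(delta), and P(N <= k) >= 1/2 since the median of Poisson(k) is at
   most k. *)

section \<open>Entrywise l1 norm of matrices\<close>

definition mat_l1 :: "'a::real_normed_vector^'n^'n \<Rightarrow> real" where
  "mat_l1 M = (\<Sum>i\<in>UNIV. \<Sum>j\<in>UNIV. norm (M $ i $ j))"

lemma mat_l1_nonneg: "0 \<le> mat_l1 M"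
  unfolding mat_l1_def by (intro sum_nonneg norm_ge_zero)

lemma norm_le_mat_l1: "norm M \<le> mat_l1 M"
proof -
  have "norm M \<le> (\<Sum>i\<in>UNIV. norm (M $ i))"
    unfolding norm_vec_def by (rule L2_set_le_sum) auto
  also have "\<dots> \<le> mat_l1 M"
    unfolding mat_l1_def by (intro sum_mono) (simp add: norm_vec_def L2_set_le_sum)
  finally show ?thesis .
qed

lemma norm_matrix_entry_le: "norm (M $ i $ j) \<le> norm M"
  using Finite_Cartesian_Product.norm_nth_le[of "M $ i" j]
    Finite_Cartesian_Product.norm_nth_le[of M i]
  by (rule order_trans)

lemma mat_l1_le_norm:
  "mat_l1 (M::'a::real_normed_vector^'n^'n) \<le> real (CARD('n) * CARD('n)) * norm M"
proof -
  have "mat_l1 M \<le> (\<Sum>i\<in>(UNIV::'n set). \<Sum>j\<in>(UNIV::'n set). norm M)"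
    unfolding mat_l1_def by (intro sum_mono norm_matrix_entry_le)
  then show ?thesis by simp
qed

lemma mat_l1_add: "mat_l1 (A + B) \<le> mat_l1 A + mat_l1 B"
  unfolding mat_l1_def by (simp add: sum.distrib[symmetric] sum_mono norm_triangle_ineq)

lemma mat_l1_scaleR: "mat_l1 (r *\<^sub>R A) = \<bar>r\<bar> * mat_l1 A"
  unfolding mat_l1_def by (simp add: sum_distrib_left)

lemma mat_l1_mult: "mat_l1 (A ** B) \<le> mat_l1 A * mat_l1 (B::'a::real_normed_algebra_1^'n^'n)"
proof -
  have "mat_l1 (A ** B) \<le> (\<Sum>i\<in>UNIV. \<Sum>j\<in>UNIV. \<Sum>k\<in>UNIV. norm (A$i$k) * norm (B$k$j))"
    unfolding mat_l1_def matrix_matrix_mult_def vec_lambda_beta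
    by (intro sum_mono order_trans[OF norm_sum] norm_mult_ineq)
  also have "\<dots> = (\<Sum>i\<in>UNIV. \<Sum>k\<in>UNIV. \<Sum>j\<in>UNIV. norm (A$i$k) * norm (B$k$j))"
    by (intro sum.cong refl sum.swap)
  also have "\<dots> = (\<Sum>i\<in>UNIV. \<Sum>k\<in>UNIV. norm (A$i$k) * (\<Sum>j\<in>UNIV. norm (B$k$j)))"
    by (simp add: sum_distrib_left)
  also have "\<dots> \<le> (\<Sum>i\<in>UNIV. \<Sum>k\<in>UNIV. norm (A$i$k) * mat_l1 B)"
    unfolding mat_l1_def
    by (intro sum_mono mult_left_mono member_le_sum[where f="\<lambda>k. \<Sum>j\<in>UNIV. norm (B $ k $ j)"])
      (auto intro: sum_nonneg)
  also have "\<dots> = mat_l1 A * mat_l1 B"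
    unfolding mat_l1_def by (simp add: sum_distrib_right)
  finally show ?thesis .
qed

lemma mat_l1_mat_1: "mat_l1 (mat 1 :: 'a::real_normed_algebra_1^'n^'n) = real CARD('n)"
  unfolding mat_l1_def mat_def by (simp add: if_distrib[of norm] cong: if_cong)

lemma mat_l1_matrix_pow:
  "mat_l1 (matrix_pow (M::'a::real_normed_algebra_1^'n^'n) m) \<le> real CARD('n) * mat_l1 M ^ m"
proof (induction m)
  case 0
  then show ?case by (simp add: mat_l1_mat_1)
next
  case (Suc m)
  have "mat_l1 (matrix_pow M (Suc m)) \<le> mat_l1 M * mat_l1 (matrix_pow M m)"
    by (simp add: mat_l1_mult)
  also have "\<dots> \<le> mat_l1 M * (real CARD('n) * mat_l1 M ^ m)"
    by (intro mult_left_mono Suc mat_l1_nonneg)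
  finally show ?case by (simp add: algebra_simps)
qed

lemma abs_Re_trace_le_mat_l1: "\<bar>Re (trace M)\<bar> \<le> mat_l1 M"
proof -
  have "\<bar>Re (trace M)\<bar> \<le> (\<Sum>i\<in>UNIV. norm (M $ i $ i))"
    unfolding trace_def by (rule order_trans[OF abs_Re_le_cmod norm_sum])
  also have "\<dots> \<le> mat_l1 M"
    unfolding mat_l1_def by (intro sum_mono member_le_sum) auto
  finally show ?thesis .
qed

lemma bounded_bilinear_matrix_mult:
  "bounded_bilinear ((**) :: 'a::real_normed_algebra_1^'n^'n \<Rightarrow> 'a^'n^'n \<Rightarrow> 'a^'n^'n)"
proof
  fix A A' B B' :: "'a^'n^'n" and r :: real
  show "(A + A') ** B = A ** B + A' ** B"
    by (simp add: vec_eq_iff matrix_matrix_mult_def distrib_right sum.distrib)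
  show "A ** (B + B') = A ** B + A ** B'"
    by (rule matrix_add_ldistrib)
  show "r *\<^sub>R A ** B = r *\<^sub>R (A ** B)" "A ** r *\<^sub>R B = r *\<^sub>R (A ** B)"
    by (simp_all add: vec_eq_iff matrix_matrix_mult_def scaleR_sum_right)
next
  let ?c = "real (CARD('n) * CARD('n))"
  show "\<exists>K. \<forall>(A::'a^'n^'n) (B::'a^'n^'n). norm (A ** B) \<le> norm A * norm B * K"
  proof (intro exI[of _ "?c * ?c"] allI)
    fix A B :: "'a^'n^'n"
    have "norm (A ** B) \<le> mat_l1 A * mat_l1 B"
      by (rule order_trans[OF norm_le_mat_l1 mat_l1_mult])
    also have "\<dots> \<le> (?c * norm A) * (?c * norm B)"
      by (intro mult_mono mat_l1_le_norm mat_l1_nonneg) auto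
    also have "\<dots> = norm A * norm B * (?c * ?c)"
      by (simp add: algebra_simps)
    finally show "norm (A ** B) \<le> norm A * norm B * (?c * ?c)" .
  qed
qed

section \<open>Convergence of the matrix exponential and the law of exponents\<close>

lemma sums_matrixI:
  assumes "\<And>i j. (\<lambda>m. f m $ i $ j) sums (S $ i $ j)"
  shows "f sums S"
  using assms unfolding sums_def by (intro vec_tendstoI) simp

lemma Cauchy_product_sums_matrix:
  fixes f g :: "nat \<Rightarrow> 'a::{real_normed_algebra_1,banach}^'n^'n"
  assumes f: "summable (\<lambda>m. norm (f m))" and g: "summable (\<lambda>m. norm (g m))"
  shows "(\<lambda>m. \<Sum>l\<le>m. f l ** g (m - l)) sums (suminf f ** suminf g)"
proof (rule sums_matrixI)
  fix i j
  have entry_summable: "summable (\<lambda>m. norm (h m $ i' $ j'))"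
    if "summable (\<lambda>m. norm (h m))" for h :: "nat \<Rightarrow> 'a^'n^'n" and i' j'
    using that by (rule summable_comparison_test'[where N=0]) (simp add: norm_matrix_entry_le)
  have entry_suminf: "(\<Sum>m. h m $ i' $ j') = suminf h $ i' $ j'"
    if "summable (\<lambda>m. norm (h m))" for h :: "nat \<Rightarrow> 'a^'n^'n" and i' j'
    using sums_vec_nth[OF sums_vec_nth[OF summable_sums[OF summable_norm_cancel[OF that]]]]
    by (rule sums_unique[symmetric])
  have "(\<lambda>m. \<Sum>l\<le>m. f l $ i $ k * g (m - l) $ k $ j)
      sums (suminf f $ i $ k * suminf g $ k $ j)" for k
    using Cauchy_product_sums[OF entry_summable[OF f] entry_summable[OF g]]
    by (simp only: entry_suminf[OF f] entry_suminf[OF g])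
  then have "(\<lambda>m. \<Sum>k\<in>UNIV. \<Sum>l\<le>m. f l $ i $ k * g (m - l) $ k $ j)
      sums (\<Sum>k\<in>UNIV. suminf f $ i $ k * suminf g $ k $ j)"
    by (rule sums_sum)
  then show "(\<lambda>m. (\<Sum>l\<le>m. f l ** g (m - l)) $ i $ j) sums ((suminf f ** suminf g) $ i $ j)"
    by (simp add: matrix_matrix_mult_def sum.swap[of _ UNIV])
qed

lemma summable_scaled_exp_series: "summable (\<lambda>m. c * x ^ m / fact m :: real)"
  using summable_mult[OF summable_exp[of x], of c] by (simp add: field_simps)

lemma norm_mexp_term_le:
  "norm ((1 / fact m) *\<^sub>R matrix_pow (M::complex^'n^'n) m) \<le> real CARD('n) * mat_l1 M ^ m / fact m"
proof -
  have "norm ((1 / fact m) *\<^sub>R matrix_pow M m) = norm (matrix_pow M m) / fact m"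
    by simp
  also have "\<dots> \<le> real CARD('n) * mat_l1 M ^ m / fact m"
    by (intro divide_right_mono order_trans[OF norm_le_mat_l1 mat_l1_matrix_pow]) auto
  finally show ?thesis .
qed

lemma summable_norm_mexp_series:
  "summable (\<lambda>m. norm ((1 / fact m) *\<^sub>R matrix_pow (M::complex^'n^'n) m))"
  using norm_mexp_term_le[of _ M]
  by (intro summable_comparison_test'[OF summable_scaled_exp_series[of "real CARD('n)" "mat_l1 M"],
        where N=0])
    simp

lemma mexp_sums: "(\<lambda>m. (1 / fact m) *\<^sub>R matrix_pow M m) sums mexp M"
  unfolding mexp_def by (rule summable_sums[OF summable_norm_cancel[OF summable_norm_mexp_series]])

lemma matrix_pow_add: "matrix_pow M (a + b) = matrix_pow M a ** matrix_pow M b"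
  by (induction a) (simp_all add: matrix_mul_assoc)

lemma matrix_pow_Suc_right: "matrix_pow M (Suc m) = matrix_pow M m ** M"
  using matrix_pow_add[of M m 1] by simp

lemma matrix_pow_scaleR:
  "matrix_pow (r *\<^sub>R M) m = (r ^ m) *\<^sub>R matrix_pow (M::'a::real_normed_algebra_1^'n^'n) m"
  by (induction m) (simp_all add: vec_eq_iff matrix_matrix_mult_def scaleR_sum_right mult.commute)

lemma scaleR_matrix_mult:
  "(r *\<^sub>R A) ** (s *\<^sub>R B) = (r * s) *\<^sub>R (A ** (B::'a::real_normed_algebra_1^'n^'n))"
  by (simp add: vec_eq_iff matrix_matrix_mult_def scaleR_sum_right mult.commute)

lemma sum_binomial_fact:
  "(\<Sum>l\<le>m. (a::real) ^ l / fact l * (b ^ (m - l) / fact (m - l))) = (a + b) ^ m / fact m"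
proof -
  have "(a + b) ^ m = fact m * (\<Sum>l\<le>m. a ^ l / fact l * (b ^ (m - l) / fact (m - l)))"
    unfolding binomial_ring sum_distrib_left
    by (intro sum.cong refl) (simp add: binomial_fact field_simps)
  then show ?thesis by simp
qed

lemma mexp_scaleR_add:
  "mexp (a *\<^sub>R X) ** mexp (b *\<^sub>R X) = mexp ((a + b) *\<^sub>R (X::complex^'n^'n))"
proof -
  let ?term = "\<lambda>r m. (1 / fact m) *\<^sub>R matrix_pow (r *\<^sub>R X) m"
  have "(\<lambda>m. \<Sum>l\<le>m. ?term a l ** ?term b (m - l)) sums (mexp (a *\<^sub>R X) ** mexp (b *\<^sub>R X))"
    using Cauchy_product_sums_matrix[OF summable_norm_mexp_series summable_norm_mexp_series]
    by (simp only: mexp_def)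
  moreover have "(\<Sum>l\<le>m. ?term a l ** ?term b (m - l)) = ?term (a + b) m" for m
  proof -
    have "(\<Sum>l\<le>m. ?term a l ** ?term b (m - l))
        = (\<Sum>l\<le>m. (a ^ l / fact l * (b ^ (m - l) / fact (m - l))) *\<^sub>R matrix_pow X m)"
      by (intro sum.cong refl)
        (simp add: matrix_pow_scaleR scaleR_matrix_mult matrix_pow_add[symmetric] mult_ac)
    also have "\<dots> = ((a + b) ^ m / fact m) *\<^sub>R matrix_pow X m"
      by (simp only: scaleR_sum_left[symmetric] sum_binomial_fact)
    also have "\<dots> = ?term (a + b) m"
      by (simp add: matrix_pow_scaleR)
    finally show ?thesis .
  qed
  ultimately have "(\<lambda>m. ?term (a + b) m) sums (mexp (a *\<^sub>R X) ** mexp (b *\<^sub>R X))"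
    by simp
  then show ?thesis
    using mexp_sums by (rule sums_unique2)
qed

section \<open>Hermitian and positive semidefinite matrices\<close>

definition conj_transpose :: "complex^'n^'m \<Rightarrow> complex^'m^'n" where
  "conj_transpose M = (\<chi> i j. cnj (M $ j $ i))"

lemma conj_transpose_nth [simp]: "conj_transpose M $ i $ j = cnj (M $ j $ i)"
  unfolding conj_transpose_def by simp

lemma hermitian_iff_conj_transpose: "hermitian M \<longleftrightarrow> conj_transpose M = M"
  unfolding hermitian_def vec_eq_iff conj_transpose_nth by (simp only: eq_commute)

lemma conj_transpose_mult: "conj_transpose (A ** B) = conj_transpose B ** conj_transpose A"
  by (simp add: vec_eq_iff matrix_matrix_mult_def mult.commute)

lemma conj_transpose_matrix_pow: "conj_transpose (matrix_pow M m) = matrix_pow (conj_transpose M) m"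
proof (induction m)
  case 0
  then show ?case by (simp add: vec_eq_iff mat_def)
next
  case (Suc m)
  have "conj_transpose (matrix_pow M (Suc m)) = conj_transpose (matrix_pow M m) ** conj_transpose M"
    by (simp only: matrix_pow.simps conj_transpose_mult)
  also have "\<dots> = matrix_pow (conj_transpose M) (Suc m)"
    by (simp only: Suc matrix_pow_Suc_right)
  finally show ?case .
qed

lemma conj_transpose_mexp: "conj_transpose (mexp M) = mexp (conj_transpose M)"
proof -
  have "(\<lambda>m. (1 / fact m) *\<^sub>R matrix_pow (conj_transpose M) m) sums conj_transpose (mexp M)"
  proof (rule sums_matrixI)
    fix i j
    have "(\<lambda>m. cnj (((1 / fact m) *\<^sub>R matrix_pow M m) $ j $ i)) sums cnj (mexp M $ j $ i)"
      by (intro sums_cnj[THEN iffD2] sums_vec_nth mexp_sums)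
    then show "(\<lambda>m. ((1 / fact m) *\<^sub>R matrix_pow (conj_transpose M) m) $ i $ j)
        sums (conj_transpose (mexp M) $ i $ j)"
      by (simp flip: conj_transpose_matrix_pow)
  qed
  then show ?thesis
    using mexp_sums by (rule sums_unique2)
qed

lemma hermitian_mexp: "hermitian M \<Longrightarrow> hermitian (mexp M)"
  by (simp add: hermitian_iff_conj_transpose conj_transpose_mexp)

lemma conj_transpose_add: "conj_transpose (A + B) = conj_transpose A + conj_transpose B"
  by (simp add: vec_eq_iff)

lemma conj_transpose_diff: "conj_transpose (A - B) = conj_transpose A - conj_transpose B"
  by (simp add: vec_eq_iff)

lemma conj_transpose_scaleR: "conj_transpose (r *\<^sub>R A) = r *\<^sub>R conj_transpose A"
  by (simp add: vec_eq_iff)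

lemma hermitian_zero: "hermitian 0"
  by (simp add: hermitian_def)

lemma hermitian_add: "hermitian A \<Longrightarrow> hermitian B \<Longrightarrow> hermitian (A + B)"
  by (simp add: hermitian_iff_conj_transpose conj_transpose_add)

lemma hermitian_diff: "hermitian A \<Longrightarrow> hermitian B \<Longrightarrow> hermitian (A - B)"
  by (simp add: hermitian_iff_conj_transpose conj_transpose_diff)

lemma hermitian_scaleR: "hermitian A \<Longrightarrow> hermitian (r *\<^sub>R A)"
  by (simp add: hermitian_iff_conj_transpose conj_transpose_scaleR)

lemma hermitian_sum: "(\<And>i. i \<in> S \<Longrightarrow> hermitian (f i)) \<Longrightarrow> hermitian (sum f S)"
  by (induction S rule: infinite_finite_induct) (simp_all add: hermitian_zero hermitian_add)

definition qform :: "complex^'n^'n \<Rightarrow> complex^'n \<Rightarrow> complex" where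
  "qform A x = (\<Sum>i\<in>UNIV. \<Sum>j\<in>UNIV. cnj (x $ i) * A $ i $ j * x $ j)"

lemma psd_iff_qform: "psd A \<longleftrightarrow> hermitian A \<and> (\<forall>x. 0 \<le> Re (qform A x))"
  unfolding psd_def qform_def ..

lemma qform_add: "qform (A + B) x = qform A x + qform B x"
  unfolding qform_def by (simp add: distrib_left distrib_right sum.distrib)

lemma qform_scaleR: "qform (r *\<^sub>R A) x = r *\<^sub>R qform A x"
  unfolding qform_def by (simp add: scaleR_sum_right)

lemma qform_mat_1: "qform (mat 1) x = (\<Sum>i\<in>UNIV. cnj (x $ i) * x $ i)"
proof -
  have "cnj (x $ i) * mat 1 $ i $ j * x $ j = (if i = j then cnj (x $ i) * x $ j else 0)" for i j
    by (simp add: mat_def)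
  then show ?thesis
    unfolding qform_def by simp
qed

lemma trace_conj_transpose_mult_qform:
  "trace (conj_transpose C ** (A ** C)) = (\<Sum>j\<in>UNIV. qform A (column j C))"
  unfolding trace_def matrix_matrix_mult_def qform_def column_def
  by (simp add: sum_distrib_left mult.assoc)

lemma psd_hermitian: "psd A \<Longrightarrow> hermitian A"
  by (simp add: psd_def)

lemma psd_zero: "psd 0"
  unfolding psd_iff_qform qform_def by (simp add: hermitian_zero)

lemma psd_add: "psd A \<Longrightarrow> psd B \<Longrightarrow> psd (A + B)"
  unfolding psd_iff_qform by (simp add: hermitian_add qform_add)

lemma psd_scaleR: "psd A \<Longrightarrow> 0 \<le> r \<Longrightarrow> psd (r *\<^sub>R A)"
  unfolding psd_iff_qform by (simp add: hermitian_scaleR qform_scaleR)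

lemma psd_sum: "(\<And>i. i \<in> S \<Longrightarrow> psd (f i)) \<Longrightarrow> psd (sum f S)"
  by (induction S rule: infinite_finite_induct) (simp_all add: psd_zero psd_add)

lemma psd_mat_1: "psd (mat 1 :: complex^'n^'n)"
  unfolding psd_iff_qform qform_mat_1
  by (simp add: hermitian_iff_conj_transpose vec_eq_iff mat_def Re_sum sum_nonneg)

lemma Re_trace_psd_mult_square_nonneg:
  assumes A: "psd A" and B: "hermitian B"
  shows "0 \<le> Re (trace (A ** (B ** B)))"
proof -
  have "trace (A ** (B ** B)) = trace (conj_transpose B ** (A ** B))"
    using trace_mul_sym[of "A ** B" B] B
    by (simp add: matrix_mul_assoc hermitian_iff_conj_transpose)
  also have "\<dots> = (\<Sum>j\<in>UNIV. qform A (column j B))"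
    by (rule trace_conj_transpose_mult_qform)
  finally show ?thesis
    using A by (simp add: Re_sum sum_nonneg psd_iff_qform)
qed

lemma Re_trace_psd_mult_mexp_nonneg:
  assumes "psd A" "hermitian X"
  shows "0 \<le> Re (trace (A ** mexp X))"
  using Re_trace_psd_mult_square_nonneg[OF assms(1) hermitian_mexp[OF hermitian_scaleR[OF assms(2)]],
      of "1/2"]
  by (simp add: mexp_scaleR_add)

lemma Re_trace_mexp_nonneg: "hermitian X \<Longrightarrow> 0 \<le> Re (trace (mexp X))"
  using Re_trace_psd_mult_mexp_nonneg[OF psd_mat_1] by simp

section \<open>Monotonicity of the trace of the matrix exponential\<close>

primrec matrix_pow_deriv :: "'a::semiring_1^'n^'n \<Rightarrow> 'a^'n^'n \<Rightarrow> nat \<Rightarrow> 'a^'n^'n" where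
  "matrix_pow_deriv X X' 0 = 0"
| "matrix_pow_deriv X X' (Suc m) = X' ** matrix_pow X m + X ** matrix_pow_deriv X X' m"

lemma has_vector_derivative_matrix_pow:
  fixes X :: "real \<Rightarrow> 'a::real_normed_algebra_1^'n^'n"
  assumes "(X has_vector_derivative X') (at t)"
  shows "((\<lambda>t. matrix_pow (X t) m) has_vector_derivative matrix_pow_deriv (X t) X' m) (at t)"
proof (induction m)
  case 0
  then show ?case by simp
next
  case (Suc m)
  from bounded_bilinear.has_vector_derivative[OF bounded_bilinear_matrix_mult assms Suc]
  show ?case by (simp add: add.commute)
qed

lemma trace_matrix_pow_mult_deriv:
  "trace (matrix_pow X j ** matrix_pow_deriv X X' m)
     = of_nat m * trace (X' ** matrix_pow (X::'a::comm_ring_1^'n^'n) (j + m - 1))"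
proof (induction m arbitrary: j)
  case 0
  then show ?case by (simp add: trace_def matrix_matrix_mult_def)
next
  case (Suc m)
  have "trace (matrix_pow X j ** (X' ** matrix_pow X m))
      = trace ((X' ** matrix_pow X m) ** matrix_pow X j)"
    by (rule trace_mul_sym)
  also have "\<dots> = trace (X' ** matrix_pow X (j + m))"
    by (simp only: matrix_mul_assoc[symmetric] matrix_pow_add[symmetric] add.commute)
  finally have first:
    "trace (matrix_pow X j ** (X' ** matrix_pow X m)) = trace (X' ** matrix_pow X (j + m))" .
  have "trace (matrix_pow X j ** (X ** matrix_pow_deriv X X' m))
      = trace (matrix_pow X (Suc j) ** matrix_pow_deriv X X' m)"
    by (simp only: matrix_mul_assoc matrix_pow_Suc_right)
  also have "\<dots> = of_nat m * trace (X' ** matrix_pow X (j + m))"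
    by (simp only: Suc.IH add_Suc diff_Suc_1)
  finally have second: "trace (matrix_pow X j ** (X ** matrix_pow_deriv X X' m))
      = of_nat m * trace (X' ** matrix_pow X (j + m))" .
  show ?case
    by (simp only: matrix_pow_deriv.simps matrix_add_ldistrib trace_add first second
        add_Suc_right diff_Suc_1 of_nat_Suc distrib_right mult_1_left add.commute)
qed

lemma trace_matrix_pow_deriv:
  "trace (matrix_pow_deriv X X' (Suc m))
     = of_nat (Suc m) * trace (X' ** matrix_pow (X::'a::comm_ring_1^'n^'n) m)"
  using trace_matrix_pow_mult_deriv[of X 0 X' "Suc m"] by (simp del: matrix_pow_deriv.simps)

lemma bounded_linear_Re_trace_mult:
  fixes B :: "complex^'n^'n"
  shows "bounded_linear (\<lambda>M. Re (trace (B ** M)))"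
proof -
  have "bounded_linear (\<lambda>M::complex^'n^'n. \<Sum>i\<in>UNIV. M $ i $ i)"
    by (intro bounded_linear_sum
        bounded_linear_compose[OF bounded_linear_vec_nth bounded_linear_vec_nth])
  then have "bounded_linear (trace :: complex^'n^'n \<Rightarrow> complex)"
    unfolding trace_def[abs_def] .
  from bounded_linear_compose[OF this
      bounded_bilinear.bounded_linear_right[OF bounded_bilinear_matrix_mult]]
  have "bounded_linear (\<lambda>M. trace (B ** M))" .
  from bounded_linear_compose[OF bounded_linear_Re this] show ?thesis .
qed

lemma sums_Re_trace_mult_mexp:
  "(\<lambda>m. Re (trace (B ** matrix_pow M m)) / fact m) sums Re (trace (B ** mexp (M::complex^'n^'n)))"
proof -
  have "(\<lambda>m. Re (trace (B ** ((1 / fact m) *\<^sub>R matrix_pow M m)))) sums Re (trace (B ** mexp M))"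
    by (rule bounded_linear.sums[OF bounded_linear_Re_trace_mult mexp_sums])
  moreover have "Re (trace (B ** ((1 / fact m) *\<^sub>R matrix_pow M m)))
      = Re (trace (B ** matrix_pow M m)) / fact m" for m
    using linear_scale[OF bounded_linear.linear[OF bounded_linear_Re_trace_mult[of B]]] by simp
  ultimately show ?thesis by simp
qed

lemma has_real_derivative_Re_trace_matrix_pow_line:
  fixes H B :: "complex^'n^'n"
  shows "((\<lambda>s. Re (trace (matrix_pow (H + s *\<^sub>R B) (Suc m))) / fact (Suc m)) has_real_derivative
           Re (trace (B ** matrix_pow (H + t *\<^sub>R B) m)) / fact m) (at t)"
proof -
  have "((\<lambda>s. H + s *\<^sub>R B) has_vector_derivative B) (at t)"
    by (auto intro!: derivative_eq_intros)
  from bounded_linear.has_vector_derivative[OF bounded_linear_Re_trace_mult[of "mat 1"]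
      has_vector_derivative_matrix_pow[OF this, of "Suc m"]]
  have "((\<lambda>s. Re (trace (matrix_pow (H + s *\<^sub>R B) (Suc m)))) has_real_derivative
      real (Suc m) * Re (trace (B ** matrix_pow (H + t *\<^sub>R B) m))) (at t)"
    by (simp add: has_real_derivative_iff_has_vector_derivative trace_matrix_pow_deriv
        del: matrix_pow.simps matrix_pow_deriv.simps)
  from DERIV_cdivide[OF this, of "fact (Suc m)"] show ?thesis
    by (simp add: fact_Suc del: matrix_pow.simps of_nat_Suc)
qed

lemma abs_Re_trace_mult_matrix_pow_line_le:
  fixes H B :: "complex^'n^'n"
  assumes "\<bar>s\<bar> \<le> r"
  shows "\<bar>Re (trace (B ** matrix_pow (H + s *\<^sub>R B) m))\<bar>
           \<le> mat_l1 B * real CARD('n) * (mat_l1 H + r * mat_l1 B) ^ m"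
proof -
  have "mat_l1 (H + s *\<^sub>R B) \<le> mat_l1 H + \<bar>s\<bar> * mat_l1 B"
    using mat_l1_add[of H "s *\<^sub>R B"] by (simp add: mat_l1_scaleR)
  also have "\<dots> \<le> mat_l1 H + r * mat_l1 B"
    using assms by (intro add_left_mono mult_right_mono mat_l1_nonneg)
  finally have line_bound: "mat_l1 (H + s *\<^sub>R B) \<le> mat_l1 H + r * mat_l1 B" .
  have "\<bar>Re (trace (B ** matrix_pow (H + s *\<^sub>R B) m))\<bar> \<le> mat_l1 (B ** matrix_pow (H + s *\<^sub>R B) m)"
    by (rule abs_Re_trace_le_mat_l1)
  also have "\<dots> \<le> mat_l1 B * mat_l1 (matrix_pow (H + s *\<^sub>R B) m)"
    by (rule mat_l1_mult)
  also have "\<dots> \<le> mat_l1 B * (real CARD('n) * (mat_l1 H + r * mat_l1 B) ^ m)"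
    by (intro mult_left_mono order_trans[OF mat_l1_matrix_pow] power_mono line_bound mat_l1_nonneg)
      simp_all
  finally show ?thesis
    by (simp add: mult.assoc)
qed

lemma has_real_derivative_Re_trace_mexp:
  fixes H B :: "complex^'n^'n"
  shows "((\<lambda>s. Re (trace (mexp (H + s *\<^sub>R B)))) has_real_derivative
           Re (trace (B ** mexp (H + t *\<^sub>R B)))) (at t)"
proof -
  \<comment> \<open>the constant term tr I = CARD('n) is split off, so term m of the derived series is ?h' m\<close>
  let ?h = "\<lambda>m s. Re (trace (matrix_pow (H + s *\<^sub>R B) (Suc m))) / fact (Suc m)"
  let ?h' = "\<lambda>m s. Re (trace (B ** matrix_pow (H + s *\<^sub>R B) m)) / fact m"
  let ?S = "{t - 1<..<t + 1}"
  have sums: "(\<lambda>m. ?h m s) sums (Re (trace (mexp (H + s *\<^sub>R B))) - real CARD('n))" for s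
    using sums_Re_trace_mult_mexp[of "mat 1" "H + s *\<^sub>R B"]
    by (subst sums_Suc_iff) (simp add: trace_I)
  have bound: "norm (?h' m s)
      \<le> mat_l1 B * real CARD('n) * (mat_l1 H + (\<bar>t\<bar> + 1) * mat_l1 B) ^ m / fact m"
    if "s \<in> ?S" for m s
  proof -
    have "\<bar>s\<bar> \<le> \<bar>t\<bar> + 1"
      using that by auto
    from abs_Re_trace_mult_matrix_pow_line_le[OF this, where H=H and B=B and m=m] show ?thesis
      by (simp add: divide_right_mono)
  qed
  have "((\<lambda>s. \<Sum>m. ?h m s) has_real_derivative (\<Sum>m. ?h' m t)) (at t)"
  proof (rule has_field_derivative_series'(2)[of ?S])
    show "convex ?S"
      by (rule convex_real_interval)
    show "(?h m has_real_derivative ?h' m s) (at s within ?S)" for m s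
      by (rule has_field_derivative_at_within[OF has_real_derivative_Re_trace_matrix_pow_line])
    have "uniform_limit ?S (\<lambda>n s. \<Sum>m<n. ?h' m s) (\<lambda>s. \<Sum>m. ?h' m s) sequentially"
      by (rule Weierstrass_m_test[OF bound summable_scaled_exp_series])
    then show "uniformly_convergent_on ?S (\<lambda>n s. \<Sum>m<n. ?h' m s)"
      unfolding uniformly_convergent_on_def by blast
    show "t \<in> ?S" "summable (\<lambda>m. ?h m t)" "t \<in> interior ?S"
      using sums by (auto simp: sums_iff)
  qed
  then have "((\<lambda>s. (\<Sum>m. ?h m s) + real CARD('n)) has_real_derivative (\<Sum>m. ?h' m t)) (at t)"
    by (auto intro!: derivative_eq_intros)
  moreover have "(\<lambda>s. (\<Sum>m. ?h m s) + real CARD('n)) = (\<lambda>s. Re (trace (mexp (H + s *\<^sub>R B))))"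
    using sums by (simp add: sums_iff)
  moreover have "(\<Sum>m. ?h' m t) = Re (trace (B ** mexp (H + t *\<^sub>R B)))"
    using sums_Re_trace_mult_mexp[of B "H + t *\<^sub>R B"] by (simp add: sums_iff)
  ultimately show ?thesis by simp
qed

lemma Re_trace_mexp_mono:
  assumes X: "hermitian X" and Y: "psd (Y - X)"
  shows "Re (trace (mexp X)) \<le> Re (trace (mexp Y))"
proof -
  let ?phi = "\<lambda>s. Re (trace (mexp (X + s *\<^sub>R (Y - X))))"
  have "?phi 0 \<le> ?phi 1"
  proof (rule DERIV_nonneg_imp_increasing_open[of 0 1 ?phi])
    fix s :: real
    have "0 \<le> Re (trace ((Y - X) ** mexp (X + s *\<^sub>R (Y - X))))"
      using X psd_hermitian[OF Y]
      by (intro Re_trace_psd_mult_mexp_nonneg Y hermitian_add hermitian_scaleR)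
    then show "\<exists>y. (?phi has_real_derivative y) (at s) \<and> 0 \<le> y"
      using has_real_derivative_Re_trace_mexp[of X "Y - X" s] by blast
  next
    show "continuous_on {0..1} ?phi"
      by (intro continuous_at_imp_continuous_on ballI
          DERIV_isCont[OF has_real_derivative_Re_trace_mexp])
  qed simp
  then show ?thesis by simp
qed

section \<open>Occupancy counts and Poissonization\<close>

definition occupancy_pmf :: "nat \<Rightarrow> nat \<Rightarrow> (nat \<Rightarrow> nat) pmf" where
  "occupancy_pmf k n = map_pmf (occupancy k) (balls_in_bins k n)"

lemma occupancy_pmf_0: "occupancy_pmf 0 n = return_pmf (\<lambda>_. 0)"
  by (simp add: occupancy_pmf_def balls_in_bins_def occupancy_def fun_eq_iff)

lemma occupancy_fun_upd:
  "occupancy (Suc m) (f(m := y)) = (occupancy m f)(y := Suc (occupancy m f y))"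
proof
  fix i
  show "occupancy (Suc m) (f(m := y)) i = ((occupancy m f)(y := Suc (occupancy m f y))) i"
  proof (cases "y = i")
    case True
    then have "{j \<in> {..<Suc m}. (f(m := y)) j = i} = insert m {j \<in> {..<m}. f j = i}"
      by auto
    with True show ?thesis by (simp add: occupancy_def)
  next
    case False
    then have "{j \<in> {..<Suc m}. (f(m := y)) j = i} = {j \<in> {..<m}. f j = i}"
      by auto
    with False show ?thesis by (simp add: occupancy_def)
  qed
qed

lemma occupancy_pmf_Suc:
  "occupancy_pmf (Suc m) n
     = pmf_of_set {..<n} \<bind> (\<lambda>y. map_pmf (\<lambda>c. c(y := Suc (c y))) (occupancy_pmf m n))"
proof -
  have balls: "balls_in_bins (Suc m) n
      = pmf_of_set {..<n} \<bind> (\<lambda>y. map_pmf (\<lambda>f. f(m := y)) (balls_in_bins m n))"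
    unfolding balls_in_bins_def lessThan_Suc by (subst Pi_pmf_insert') (auto simp: map_pmf_def)
  show ?thesis
    unfolding occupancy_pmf_def balls map_bind_pmf map_pmf_comp occupancy_fun_upd ..
qed

lemma pmf_map_add_ball:
  "pmf (map_pmf (\<lambda>c. c(y := Suc (c y))) p) c = (if 0 < c y then pmf p (c(y := c y - 1)) else 0)"
proof (cases "0 < c y")
  case True
  have "inj (\<lambda>c::'a \<Rightarrow> nat. c(y := Suc (c y)))"
    by (rule injI) (metis fun_upd_same fun_upd_triv fun_upd_upd nat.inject)
  moreover have "c = (c(y := c y - 1))(y := Suc ((c(y := c y - 1)) y))"
    using True by simp
  ultimately show ?thesis
    using True pmf_map_inj'[of "\<lambda>c. c(y := Suc (c y))" p "c(y := c y - 1)"] by simp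
next
  case False
  then have "c \<notin> (\<lambda>c. c(y := Suc (c y))) ` set_pmf p"
    by auto
  with False show ?thesis
    by (simp add: pmf_map_outside)
qed

definition multinomial_prob :: "nat \<Rightarrow> nat \<Rightarrow> (nat \<Rightarrow> nat) \<Rightarrow> real" where
  "multinomial_prob m n c =
     (if (\<forall>i\<ge>n. c i = 0) \<and> (\<Sum>i<n. c i) = m then fact m / (\<Prod>i<n. fact (c i)) / real n ^ m else 0)"

lemma sum_fun_upd_remove: "finite A \<Longrightarrow> y \<in> A \<Longrightarrow> sum (g(y := v)) A = v + sum g (A - {y})"
  using sum.remove[of A y "g(y := v)"] sum.cong[of "A - {y}" _ "g(y := v)" g] by simp

lemma prod_fun_upd_remove: "finite A \<Longrightarrow> y \<in> A \<Longrightarrow> prod (g(y := v)) A = v * prod g (A - {y})"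
  using prod.remove[of A y "g(y := v)"] prod.cong[of "A - {y}" _ "g(y := v)" g] by simp

lemma multinomial_prob_remove_ball:
  assumes "y < n"
  shows "(if 0 < c y then multinomial_prob m n (c(y := c y - 1)) else 0)
       = (if (\<forall>i\<ge>n. c i = 0) \<and> (\<Sum>i<n. c i) = Suc m
          then fact m * real (c y) / (\<Prod>i<n. fact (c i)) / real n ^ m else 0)"
proof (cases "0 < c y")
  case True
  let ?c' = "c(y := c y - 1)"
  let ?P = "\<lambda>c. \<Prod>i<n. fact (c i) :: real"
  have y: "y \<in> {..<n}"
    using assms by simp
  have "sum ?c' {..<n} = c y - 1 + sum c ({..<n} - {y})" "sum c {..<n} = c y + sum c ({..<n} - {y})"
    using sum_fun_upd_remove[OF _ y] sum.remove[OF _ y] by simp_all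
  with True have "sum ?c' {..<n} = m \<longleftrightarrow> sum c {..<n} = Suc m"
    by linarith
  moreover have "(\<forall>i\<ge>n. ?c' i = 0) \<longleftrightarrow> (\<forall>i\<ge>n. c i = 0)"
    using assms by auto
  ultimately have support: "((\<forall>i\<ge>n. ?c' i = 0) \<and> (\<Sum>i<n. ?c' i) = m)
      \<longleftrightarrow> ((\<forall>i\<ge>n. c i = 0) \<and> (\<Sum>i<n. c i) = Suc m)"
    by simp
  have "?P ?c' = prod ((\<lambda>i. fact (c i))(y := fact (c y - 1))) {..<n}"
    by (rule prod.cong) auto
  also have "\<dots> = fact (c y - 1) * prod (\<lambda>i. fact (c i)) ({..<n} - {y})"
    using prod_fun_upd_remove[OF _ y] by simp
  finally have "real (c y) * ?P ?c' = ?P c"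
    using prod.remove[OF _ y, of "\<lambda>i. fact (c i) :: real"] fact_reduce[OF True, where 'a=real]
    by simp
  moreover have "?P ?c' > 0"
    by (intro prod_pos) auto
  ultimately have ratio: "fact m / ?P ?c' = fact m * real (c y) / ?P c"
    using True by (simp add: field_simps)
  show ?thesis
    using True unfolding multinomial_prob_def support ratio by simp
qed simp

lemma pmf_occupancy_pmf:
  assumes "0 < n"
  shows "pmf (occupancy_pmf m n) c = multinomial_prob m n c"
proof (induction m arbitrary: c)
  case 0
  have "(\<forall>i\<ge>n. c i = 0) \<and> (\<Sum>i<n. c i) = 0 \<longleftrightarrow> c = (\<lambda>_. 0)"
    by (auto simp: fun_eq_iff) (metis lessThan_iff not_le)
  then show ?case
    by (auto simp: occupancy_pmf_0 multinomial_prob_def indicator_def)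
next
  case (Suc m)
  let ?supp = "(\<forall>i\<ge>n. c i = 0) \<and> (\<Sum>i<n. c i) = Suc m"
  have "{..<n} \<noteq> {}"
    using assms by auto
  then have "pmf (occupancy_pmf (Suc m) n) c
      = (\<Sum>y<n. if 0 < c y then pmf (occupancy_pmf m n) (c(y := c y - 1)) else 0) / real n"
    by (simp add: occupancy_pmf_Suc pmf_bind_pmf_of_set pmf_map_add_ball)
  also have "\<dots> = (\<Sum>y<n. if 0 < c y then multinomial_prob m n (c(y := c y - 1)) else 0) / real n"
    by (simp only: Suc.IH)
  also have "\<dots> = (\<Sum>y<n. if ?supp
      then fact m * real (c y) / (\<Prod>i<n. fact (c i)) / real n ^ m else 0) / real n"
    by (simp add: multinomial_prob_remove_ball)
  also have "\<dots> = multinomial_prob (Suc m) n c"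
  proof (cases ?supp)
    case True
    then have "(\<Sum>y<n. fact m * real (c y) / (\<Prod>i<n. fact (c i)) / real n ^ m)
        = fact m * real (Suc m) / (\<Prod>i<n. fact (c i)) / real n ^ m"
      by (simp add: sum_divide_distrib[symmetric] sum_distrib_left[symmetric] flip: of_nat_sum)
    with True assms show ?thesis
      by (simp add: multinomial_prob_def field_simps)
  next
    case False
    show ?thesis
      unfolding multinomial_prob_def if_not_P[OF False] by simp
  qed
  finally show ?case .
qed

lemma Pi_poisson_eq_bind_occupancy_pmf:
  assumes "0 < n" "0 < r"
  shows "Pi_pmf {..<n} 0 (\<lambda>_. poisson_pmf r) = poisson_pmf (real n * r) \<bind> (\<lambda>m. occupancy_pmf m n)"
proof (rule pmf_eqI)
  fix c :: "nat \<Rightarrow> nat"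
  let ?s = "\<Sum>i<n. c i"
  let ?P = "\<Prod>i<n. fact (c i) :: real"
  have nr: "0 < real n * r"
    using assms by simp
  have "pmf (poisson_pmf (real n * r) \<bind> (\<lambda>m. occupancy_pmf m n)) c
      = measure_pmf.expectation (poisson_pmf (real n * r)) (\<lambda>m. multinomial_prob m n c)"
    by (simp add: pmf_bind pmf_occupancy_pmf[OF assms(1)])
  also have "\<dots> = (\<Sum>m\<in>{?s}. multinomial_prob m n c * pmf (poisson_pmf (real n * r)) m)"
    by (rule integral_measure_pmf_real) (auto simp: multinomial_prob_def split: if_splits)
  also have "\<dots> = multinomial_prob ?s n c * ((real n * r) ^ ?s / fact ?s * exp (- (real n * r)))"
    using nr by simp
  also have "\<dots> = pmf (Pi_pmf {..<n} 0 (\<lambda>_. poisson_pmf r)) c"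
  proof (cases "\<forall>i\<ge>n. c i = 0")
    case True
    have "pmf (Pi_pmf {..<n} 0 (\<lambda>_. poisson_pmf r)) c = (\<Prod>i<n. r ^ c i / fact (c i) * exp (- r))"
      using True assms(2) by (subst pmf_Pi) auto
    also have "\<dots> = r ^ ?s / ?P * exp (- (real n * r))"
      by (simp add: prod.distrib prod_dividef power_sum exp_of_nat_mult[symmetric])
    finally show ?thesis
      using True assms(1) by (simp add: multinomial_prob_def power_mult_distrib)
  next
    case False
    then have "pmf (Pi_pmf {..<n} 0 (\<lambda>_. poisson_pmf r)) c = 0"
      by (subst pmf_Pi) auto
    with False show ?thesis
      unfolding multinomial_prob_def by auto
  qed
  finally show "pmf (Pi_pmf {..<n} 0 (\<lambda>_. poisson_pmf r)) c
      = pmf (poisson_pmf (real n * r) \<bind> (\<lambda>m. occupancy_pmf m n)) c" ..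
qed

lemma nn_integral_occupancy_pmf_antimono:
  fixes F :: "(nat \<Rightarrow> nat) \<Rightarrow> ennreal"
  assumes "0 < n" "antimono F" "m \<le> m'"
  shows "(\<integral>\<^sup>+c. F c \<partial>occupancy_pmf m' n) \<le> (\<integral>\<^sup>+c. F c \<partial>occupancy_pmf m n)"
  using assms(3)
proof (induction m' rule: dec_induct)
  case (step m')
  have "(\<integral>\<^sup>+c. F c \<partial>occupancy_pmf (Suc m') n)
      = (\<integral>\<^sup>+y. \<integral>\<^sup>+c. F (c(y := Suc (c y))) \<partial>occupancy_pmf m' n \<partial>pmf_of_set {..<n})"
    by (simp add: occupancy_pmf_Suc)
  also have "\<dots> \<le> (\<integral>\<^sup>+y. \<integral>\<^sup>+c. F c \<partial>occupancy_pmf m' n \<partial>pmf_of_set {..<n})"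
    by (intro nn_integral_mono antimonoD[OF assms(2)]) (simp add: le_fun_def)
  also have "\<dots> = (\<integral>\<^sup>+c. F c \<partial>occupancy_pmf m' n)"
    by (simp add: measure_pmf.emeasure_space_1)
  finally show ?case
    using step.IH by (rule order_trans)
qed simp

section \<open>The median of the Poisson distribution\<close>

definition poisson_cdf :: "nat \<Rightarrow> real \<Rightarrow> real" where
  "poisson_cdf k x = exp (- x) * (\<Sum>j\<le>k. x ^ j / fact j)"

lemma prob_poisson_pmf_atMost: "0 < x \<Longrightarrow> measure_pmf.prob (poisson_pmf x) {..k} = poisson_cdf k x"
  by (simp add: measure_measure_pmf_finite poisson_cdf_def sum_distrib_left mult.commute)

lemma poisson_cdf_0: "poisson_cdf k 0 = 1"
  by (induction k) (simp_all add: poisson_cdf_def)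

lemma poisson_cdf_nonneg: "0 \<le> x \<Longrightarrow> 0 \<le> poisson_cdf k x"
  unfolding poisson_cdf_def by (intro mult_nonneg_nonneg sum_nonneg) auto

lemma has_real_derivative_poisson_cdf:
  "(poisson_cdf k has_real_derivative - exp (- x) * x ^ k / fact k) (at x)"
proof (induction k)
  case 0
  show ?case
    unfolding poisson_cdf_def by (auto intro!: derivative_eq_intros)
next
  case (Suc k)
  have split: "poisson_cdf (Suc k) = (\<lambda>x. poisson_cdf k x + exp (- x) * (x ^ Suc k / fact (Suc k)))"
    by (simp add: poisson_cdf_def fun_eq_iff algebra_simps)
  have "((\<lambda>x. exp (- x)) has_real_derivative - exp (- x)) (at x)"
    by (auto intro!: derivative_eq_intros)
  moreover have "((\<lambda>x. x ^ Suc k / fact (Suc k)) has_real_derivative x ^ k / fact k) (at x)"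
    using DERIV_cdivide[OF DERIV_pow[of "Suc k" x], of "fact (Suc k)"]
    by (simp add: fact_Suc del: of_nat_Suc)
  ultimately have "((\<lambda>x. exp (- x) * (x ^ Suc k / fact (Suc k))) has_real_derivative
      - exp (- x) * (x ^ Suc k / fact (Suc k)) + x ^ k / fact k * exp (- x)) (at x)"
    by (rule DERIV_mult)
  from DERIV_add[OF Suc this] show ?case
    unfolding split by (simp add: algebra_simps)
qed

lemma one_minus_mult_exp_two_le: "0 \<le> u \<Longrightarrow> (1 - u) * exp (2 * u) \<le> 1 + (u::real)"
proof -
  let ?g = "\<lambda>u::real. (1 + u) - (1 - u) * exp (2 * u)"
  assume "0 \<le> u"
  have "?g 0 \<le> ?g u"
  proof (rule DERIV_nonneg_imp_increasing_open[OF \<open>0 \<le> u\<close>])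
    fix x :: real
    have "1 - 2 * x \<le> exp (- (2 * x))"
      using exp_ge_add_one_self[of "- (2 * x)"] by simp
    then have "(1 - 2 * x) * exp (2 * x) \<le> 1"
      using mult_right_mono[of "1 - 2 * x" "exp (- (2 * x))" "exp (2 * x)"] by (simp add: exp_minus)
    moreover have "(?g has_real_derivative 1 - (1 - 2 * x) * exp (2 * x)) (at x)"
      by (auto intro!: derivative_eq_intros simp: algebra_simps)
    ultimately show "\<exists>y. (?g has_real_derivative y) (at x) \<and> 0 \<le> y"
      by auto
  qed (intro continuous_intros)
  then show ?thesis by simp
qed

lemma poisson_density_reflection_le:
  assumes "0 < k" "0 \<le> s" "s \<le> real k"
  shows "exp (- (real k - s)) * (real k - s) ^ k \<le> exp (- (real k + s)) * (real k + s) ^ k"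
proof -
  have "(1 - s / k) * exp (2 * (s / k)) \<le> 1 + s / k"
    using assms by (intro one_minus_mult_exp_two_le) simp
  have "(real k - s) * exp (2 * s / k) = real k * ((1 - s / k) * exp (2 * (s / k)))"
    using assms(1) by (simp add: field_simps)
  also have "\<dots> \<le> real k * (1 + s / k)"
    using \<open>(1 - s / k) * exp (2 * (s / k)) \<le> 1 + s / k\<close> by (rule mult_left_mono) simp
  also have "\<dots> = real k + s"
    using assms(1) by (simp add: field_simps)
  finally have "(real k - s) * exp (2 * s / k) \<le> real k + s" .
  then have "((real k - s) * exp (2 * s / k)) ^ k \<le> (real k + s) ^ k"
    using assms(3) by (intro power_mono) simp_all
  moreover have "exp (2 * s / k) ^ k = exp (2 * s)"
    using assms(1) by (simp add: exp_of_nat_mult[symmetric])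
  ultimately have "(real k - s) ^ k * exp (2 * s) \<le> (real k + s) ^ k"
    by (simp add: power_mult_distrib)
  have "exp (- (real k - s)) = exp (- (real k + s)) * exp (2 * s)"
    by (simp add: exp_add[symmetric])
  then have "exp (- (real k - s)) * (real k - s) ^ k
      = exp (- (real k + s)) * ((real k - s) ^ k * exp (2 * s))"
    by (simp only: mult_ac)
  also have "\<dots> \<le> exp (- (real k + s)) * (real k + s) ^ k"
    using \<open>(real k - s) ^ k * exp (2 * s) \<le> (real k + s) ^ k\<close> by (rule mult_left_mono) simp
  finally show ?thesis .
qed

lemma poisson_cdf_at_mean_ge_half:
  assumes "0 < k"
  shows "1 / 2 \<le> poisson_cdf k (real k)"
proof -
  \<comment> \<open>?D decreases on [0, k], so 2 G(k) = ?D 0 \<ge> ?D k = G(0) + G(2k) \<ge> 1 for G = poisson_cdf k\<close>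
  let ?D = "\<lambda>s. poisson_cdf k (real k - s) + poisson_cdf k (real k + s)"
  have deriv: "(?D has_real_derivative exp (- (real k - s)) * (real k - s) ^ k / fact k
      - exp (- (real k + s)) * (real k + s) ^ k / fact k) (at s)" for s
    by (auto intro!: derivative_eq_intros DERIV_chain2[OF has_real_derivative_poisson_cdf])
  have "?D (real k) \<le> ?D 0"
  proof (rule DERIV_nonpos_imp_decreasing_open[of 0 "real k" ?D])
    fix s assume "0 < s" "s < real k"
    then have "exp (- (real k - s)) * (real k - s) ^ k / fact k
        \<le> exp (- (real k + s)) * (real k + s) ^ k / fact k"
      using poisson_density_reflection_le[OF assms, of s] by (intro divide_right_mono) auto
    then show "\<exists>y. (?D has_real_derivative y) (at s) \<and> y \<le> 0"
      using deriv[of s] by (metis diff_le_0_iff_le)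
  next
    show "continuous_on {0..real k} ?D"
      using deriv by (intro continuous_at_imp_continuous_on ballI DERIV_isCont) blast
  qed simp
  then show ?thesis
    using poisson_cdf_0[of k] poisson_cdf_nonneg[of "real k + real k" k] by simp
qed

section \<open>Comparison of multinomial and Poisson expectations\<close>

lemma nn_integral_occupancy_pmf_le_Pi_poisson:
  fixes F :: "(nat \<Rightarrow> nat) \<Rightarrow> ennreal"
  assumes "0 < n" "antimono F"
  shows "(\<integral>\<^sup>+c. F c \<partial>occupancy_pmf k n)
           \<le> 2 * (\<integral>\<^sup>+Q. F Q \<partial>Pi_pmf {..<n} 0 (\<lambda>_. poisson (real k / real n)))"
proof (cases "k = 0")
  case True
  then show ?thesis
    by (simp add: occupancy_pmf_0 poisson_def mult_2)
next
  case False
  let ?G = "\<lambda>m. \<integral>\<^sup>+c. F c \<partial>occupancy_pmf m n"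
  have poissonization: "Pi_pmf {..<n} 0 (\<lambda>_. poisson (real k / real n))
      = poisson_pmf (real k) \<bind> (\<lambda>m. occupancy_pmf m n)"
    using Pi_poisson_eq_bind_occupancy_pmf[of n "real k / real n"] False assms(1)
    by (simp add: poisson_def)
  have "1 \<le> 2 * poisson_cdf k (real k)"
    using poisson_cdf_at_mean_ge_half[of k] False by simp
  then have "ennreal 1 \<le> ennreal (2 * poisson_cdf k (real k))"
    by (rule ennreal_leI)
  then have "1 \<le> 2 * ennreal (poisson_cdf k (real k))"
    by (simp add: ennreal_mult')
  then have "?G k \<le> 2 * (?G k * ennreal (poisson_cdf k (real k)))"
    using mult_left_mono[of 1 "2 * ennreal (poisson_cdf k (real k))" "?G k"] by (simp add: mult_ac)
  also have "?G k * ennreal (poisson_cdf k (real k))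
      = (\<integral>\<^sup>+m. ?G k * indicator {..k} m \<partial>poisson_pmf (real k))"
    using False
    by (simp add: nn_integral_cmult_indicator measure_pmf.emeasure_eq_measure prob_poisson_pmf_atMost)
  also have "\<dots> \<le> (\<integral>\<^sup>+m. ?G m \<partial>poisson_pmf (real k))"
    using nn_integral_occupancy_pmf_antimono[OF assms]
    by (intro nn_integral_mono) (simp split: split_indicator)
  also have "\<dots> = (\<integral>\<^sup>+Q. F Q \<partial>Pi_pmf {..<n} 0 (\<lambda>_. poisson (real k / real n)))"
    unfolding poissonization by simp
  finally show ?thesis
    by (simp add: mult_left_mono)
qed

lemma nn_integral_pmf_eq_expectation:
  fixes f :: "'a \<Rightarrow> real"
  assumes "\<And>x. 0 \<le> f x" "\<And>x. f x \<le> B"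
  shows "(\<integral>\<^sup>+x. ennreal (f x) \<partial>measure_pmf p) = ennreal (measure_pmf.expectation p f)"
proof (rule nn_integral_eq_integral)
  show "integrable (measure_pmf p) f"
    using assms by (intro measure_pmf.integrable_const_bound[where B=B]) auto
qed (use assms in simp)

lemma Re_trace_mexp_neg_weighted_sum_antimono:
  fixes A :: "nat \<Rightarrow> complex^'d^'d"
  assumes psd: "\<And>i. i < n \<Longrightarrow> psd (A i)" and E: "hermitian E"
    and "0 \<le> \<theta>" and "c \<le> c'"
  shows "Re (trace (mexp ((- \<theta>) *\<^sub>R ((\<Sum>i<n. of_nat (c' i) *\<^sub>R A i) - E))))
       \<le> Re (trace (mexp ((- \<theta>) *\<^sub>R ((\<Sum>i<n. of_nat (c i) *\<^sub>R A i) - E))))"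
proof -
  let ?X = "\<lambda>c. (- \<theta>) *\<^sub>R ((\<Sum>i<n. of_nat (c i) *\<^sub>R A i) - E)"
  have hermitian: "hermitian (?X c')"
    using psd_hermitian[OF psd] E by (intro hermitian_scaleR hermitian_diff hermitian_sum) auto
  have diff: "?X c - ?X c' = \<theta> *\<^sub>R (\<Sum>i<n. (real (c' i) - real (c i)) *\<^sub>R A i)"
    by (simp add: algebra_simps scaleR_diff_left sum_subtractf)
  have "psd (\<theta> *\<^sub>R (\<Sum>i<n. (real (c' i) - real (c i)) *\<^sub>R A i))"
    using psd \<open>0 \<le> \<theta>\<close> \<open>c \<le> c'\<close> by (auto intro!: psd_scaleR psd_sum simp: le_fun_def)
  then have "psd (?X c - ?X c')"
    unfolding diff .
  with hermitian show ?thesis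
    by (rule Re_trace_mexp_mono)
qed

theorem lemma9p2:
  fixes A :: "nat \<Rightarrow> complex^'d^'d" and n k :: nat and \<theta> :: real
  assumes "n > 0"
    and "\<And>i. i < n \<Longrightarrow> psd (A i)"
    and "\<theta> \<ge> 0"
  defines "EY \<equiv> (real k / real n) *\<^sub>R (\<Sum>i<n. A i)"
  shows "measure_pmf.expectation (balls_in_bins k n)
           (\<lambda>f. Re (trace (mexp ((- \<theta>) *\<^sub>R
              ((\<Sum>i<n. of_nat (occupancy k f i) *\<^sub>R A i) - EY)))))
         \<le> 2 * measure_pmf.expectation (Pi_pmf {..<n} 0 (\<lambda>_. poisson (real k / real n)))
           (\<lambda>Q. Re (trace (mexp ((- \<theta>) *\<^sub>R
              ((\<Sum>i<n. of_nat (Q i) *\<^sub>R A i) - EY)))))"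
proof -
  define F where "F c = Re (trace (mexp ((- \<theta>) *\<^sub>R ((\<Sum>i<n. of_nat (c i) *\<^sub>R A i) - EY))))"
    for c :: "nat \<Rightarrow> nat"
  let ?Pi = "Pi_pmf {..<n} 0 (\<lambda>_. poisson (real k / real n))"
  have EY: "hermitian EY"
    unfolding EY_def using psd_hermitian[OF assms(2)] by (intro hermitian_scaleR hermitian_sum) auto
  have F_antimono: "antimono F"
    unfolding F_def using assms(2,3) EY by (intro antimonoI Re_trace_mexp_neg_weighted_sum_antimono)
  have F_nonneg: "0 \<le> F c" for c
    unfolding F_def using psd_hermitian[OF assms(2)] EY
    by (intro Re_trace_mexp_nonneg hermitian_scaleR hermitian_diff hermitian_sum) auto
  have F_bounded: "F c \<le> F (\<lambda>_. 0)" for c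
    using F_antimono by (rule antimonoD) (simp add: le_fun_def)
  have "ennreal (measure_pmf.expectation (occupancy_pmf k n) F)
      \<le> 2 * ennreal (measure_pmf.expectation ?Pi F)"
    using nn_integral_occupancy_pmf_le_Pi_poisson[OF assms(1), of "\<lambda>c. ennreal (F c)" k]
      F_antimono
    by (simp add: monotone_def ennreal_leI nn_integral_pmf_eq_expectation[OF F_nonneg F_bounded])
  also have "\<dots> = ennreal (2 * measure_pmf.expectation ?Pi F)"
    by (simp add: ennreal_mult')
  finally have "measure_pmf.expectation (occupancy_pmf k n) F \<le> 2 * measure_pmf.expectation ?Pi F"
    by (simp add: ennreal_le_iff integral_nonneg F_nonneg)
  then show ?thesis
    by (simp add: occupancy_pmf_def F_def[abs_def])
qed

end
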